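(* A ranking method is feasible if and only if it is faithful and consistent.
   Context: Let $\mathcal{X}$ be a finite set of alternatives. A proto-ranking is an irreflexive transitive relation; a ranking is a total proto-ranking; a tournament is a total asymmetric relation on $\mathcal{X}$. Interaction: given a tournament $\mathrel{W}$, start from $R_0=\varnothing$; in each period with $R_{t-1}$ not total the chair offers a pair $\{x,y\}$ unranked by $R_{t-1}$, the winner is $x$ if $x\mathrel{W}y$ and $y$ otherwise, and $R_t$ is the transitive closure of $R_{t-1}\cup\{(\text{winner},\text{loser})\}$; stop when $R_t$ is total. A strategy assigns to each non-terminal history (sequence of (winner, loser) pairs) a pair unranked at it; its outcome under $\mathrel{W}$ is the final ranking. A ranking method is a map $\rho$ assigning a ranking to each tournament. It is feasible if there is a strategy $\sigma$ such that $\rho(\mathrel{W})$ is the outcome of $\sigma$ under $\mathrel{W}$ for every tournament $\mathrel{W}$. For a tournament $\mathrel{W}$, a ranking $R$ is more aligned with $\mathrel{W}$ than a ranking $R'$ if for all $x,y$ with $x\mathrel{W}y$, $xR'y$ implies $xRy$. $\rho$ is faithful if for every tournament $\mathrel{W}$, no ranking $R\neq\rho(\mathrel{W})$ is more aligned with $\mathrel{W}$ than $\rho(\mathrel{W})$. $\rho$ is consistent if whenever $\rho(\mathrel{W})\ne\rho(\mathrel{W}')$ for tournaments $\mathrel{W},\mathrel{W}'$, there exist alternatives $x,y$ with $x\mathrel{W}y$ and $y\mathrel{W}'x$ such that for every tournament $\mathrel{W}''\supseteq \mathrel{W}\cap\mathrel{W}'$: $x\,\rho(\mathrel{W}'')\,y$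 if and only if $x\mathrel{W}''y$. *)

theory Defs
  imports Main
begin

definition proto_ranking :: "'a rel \<Rightarrow> bool" where
  "proto_ranking R \<longleftrightarrow> irrefl R \<and> trans R"

definition ranking :: "'a rel \<Rightarrow> bool" where
  "ranking R \<longleftrightarrow> proto_ranking R \<and> total R"

definition tournament :: "'a rel \<Rightarrow> bool" where
  "tournament W \<longleftrightarrow> total W \<and> asym W"

definition unranked :: "'a rel \<Rightarrow> 'a \<Rightarrow> 'a \<Rightarrow> bool" where
  "unranked R x y \<longleftrightarrow> x \<noteq> y \<and> (x, y) \<notin> R \<and> (y, x) \<notin> R"

text \<open>Relation reached after a history (chronological list of (winner, loser) pairs):
  R_0 = {}, R_t = transitive closure of R_(t-1) plus the new pair.\<close>
definition rel_of :: "('a \<times> 'a) list \<Rightarrow> 'a rel" where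
  "rel_of h = foldl (\<lambda>R p. trancl (insert p R)) {} h"

inductive_set histories :: "('a \<times> 'a) list set" where
  Nil: "[] \<in> histories"
| snoc: "h \<in> histories \<Longrightarrow> \<not> total (rel_of h) \<Longrightarrow> unranked (rel_of h) w l
          \<Longrightarrow> h @ [(w, l)] \<in> histories"

text \<open>A strategy offers, at each non-terminal history, a pair (order irrelevant) unranked at it.\<close>
definition is_strategy :: "(('a \<times> 'a) list \<Rightarrow> 'a \<times> 'a) \<Rightarrow> bool" where
  "is_strategy \<sigma> \<longleftrightarrow>
     (\<forall>h \<in> histories. \<not> total (rel_of h) \<longrightarrow> unranked (rel_of h) (fst (\<sigma> h)) (snd (\<sigma> h)))"

definition duel :: "'a rel \<Rightarrow> 'a \<times> 'a \<Rightarrow> 'a \<times> 'a" where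
  "duel W p = (if p \<in> W then p else (snd p, fst p))"

fun hist_at :: "(('a \<times> 'a) list \<Rightarrow> 'a \<times> 'a) \<Rightarrow> 'a rel \<Rightarrow> nat \<Rightarrow> ('a \<times> 'a) list" where
  "hist_at \<sigma> W 0 = []"
| "hist_at \<sigma> W (Suc n) =
     (let h = hist_at \<sigma> W n in if total (rel_of h) then h else h @ [duel W (\<sigma> h)])"

definition outcome :: "(('a \<times> 'a) list \<Rightarrow> 'a \<times> 'a) \<Rightarrow> 'a rel \<Rightarrow> 'a rel \<Rightarrow> bool" where
  "outcome \<sigma> W R \<longleftrightarrow> (\<exists>n. total (rel_of (hist_at \<sigma> W n)) \<and> R = rel_of (hist_at \<sigma> W n))"

definition ranking_method :: "('a rel \<Rightarrow> 'a rel) \<Rightarrow> bool" where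
  "ranking_method \<rho> \<longleftrightarrow> (\<forall>W. tournament W \<longrightarrow> ranking (\<rho> W))"

definition feasible :: "('a rel \<Rightarrow> 'a rel) \<Rightarrow> bool" where
  "feasible \<rho> \<longleftrightarrow> (\<exists>\<sigma>. is_strategy \<sigma> \<and> (\<forall>W. tournament W \<longrightarrow> outcome \<sigma> W (\<rho> W)))"

definition more_aligned :: "'a rel \<Rightarrow> 'a rel \<Rightarrow> 'a rel \<Rightarrow> bool" where
  "more_aligned W R R' \<longleftrightarrow> (\<forall>x y. (x, y) \<in> W \<longrightarrow> (x, y) \<in> R' \<longrightarrow> (x, y) \<in> R)"

definition faithful :: "('a rel \<Rightarrow> 'a rel) \<Rightarrow> bool" where
  "faithful \<rho> \<longleftrightarrow>
     (\<forall>W. tournament W \<longrightarrow> \<not> (\<exists>R. ranking R \<and> R \<noteq> \<rho> W \<and> more_aligned W R (\<rho> W)))"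

definition consistent :: "('a rel \<Rightarrow> 'a rel) \<Rightarrow> bool" where
  "consistent \<rho> \<longleftrightarrow>
     (\<forall>W W'. tournament W \<longrightarrow> tournament W' \<longrightarrow> \<rho> W \<noteq> \<rho> W' \<longrightarrow>
        (\<exists>x y. (x, y) \<in> W \<and> (y, x) \<in> W' \<and>
           (\<forall>W''. tournament W'' \<longrightarrow> W \<inter> W' \<subseteq> W'' \<longrightarrow>
              ((x, y) \<in> \<rho> W'' \<longleftrightarrow> (x, y) \<in> W''))))"

end

theory Submission
  imports Defs
begin

(* Necessity: a strategy only records the tournament's verdict on the offered pairs, so its
   outcome is the transitive closure of tournament edges, which forces faithfulness; and the first
   pair on which the plays under two tournaments diverge witnesses consistency, because every
   tournament containing their common edges replays the same history up to that pair.
   Sufficiency: the chair always offers a pair whose position in rho is already decided by the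
   pairs played so far.  Such a pair exists: reversing every edge of W not yet played gives a
   tournament W' sharing with W exactly the played edges.  Every covering pair of a faithful
   ranking is a tournament edge, and a finite strict order is the transitive closure of its
   covering pairs, so rho W and rho W' differ; consistency then supplies the pair. *)

section \<open>Rankings and their covering pairs\<close>

lemma tournament_iff:
  "tournament W \<longleftrightarrow> (\<forall>x y. x \<noteq> y \<longrightarrow> (x, y) \<in> W \<or> (y, x) \<in> W) \<and> (\<forall>x y. (x, y) \<in> W \<longrightarrow> (y, x) \<notin> W)"
  unfolding tournament_def total_on_def asym_iff by blast

lemma ranking_iff:
  "ranking R \<longleftrightarrow> (\<forall>x. (x, x) \<notin> R) \<and> trans R \<and> (\<forall>x y. x \<noteq> y \<longrightarrow> (x, y) \<in> R \<or> (y, x) \<in> R)"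
  unfolding ranking_def proto_ranking_def total_on_def irrefl_def by blast

lemma tournament_swap_iff: "tournament W \<Longrightarrow> x \<noteq> y \<Longrightarrow> (y, x) \<in> W \<longleftrightarrow> (x, y) \<notin> W"
  unfolding tournament_iff by blast

lemma ranking_swap_iff: "ranking R \<Longrightarrow> x \<noteq> y \<Longrightarrow> (y, x) \<in> R \<longleftrightarrow> (x, y) \<notin> R"
  unfolding ranking_iff trans_def by blast

lemma trancl_subset_trans: "r \<subseteq> s \<Longrightarrow> trans s \<Longrightarrow> r\<^sup>+ \<subseteq> s"
  by (metis trancl_id trancl_mono_subset)

lemma total_subset_ranking_eq:
  assumes "R \<subseteq> P" "total R" "ranking P" shows "R = P"
proof (intro subset_antisym subrelI)
  fix a b assume "(a, b) \<in> P"
  with assms(2,3) have "(a, b) \<in> R \<or> (b, a) \<in> R" "(b, a) \<notin> P"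
    unfolding ranking_iff total_on_def trans_def by (metis UNIV_I)+
  with assms(1) show "(a, b) \<in> R" by blast
qed (use assms(1) in blast)

lemma total_mono: "R \<subseteq> S \<Longrightarrow> total R \<Longrightarrow> total S"
  unfolding total_on_def by blast

definition covering :: "'a rel \<Rightarrow> 'a rel" where
  "covering P = {(x, y). (x, y) \<in> P \<and> (\<nexists>z. (x, z) \<in> P \<and> (z, y) \<in> P)}"

lemma trancl_covering:
  assumes "finite P" "trans P" "irrefl P"
  shows "(covering P)\<^sup>+ = P"
proof
  show "(covering P)\<^sup>+ \<subseteq> P"
    using assms(2) by (intro trancl_subset_trans) (auto simp: covering_def)
  define between where "between x y = {z. (x, z) \<in> P \<and> (z, y) \<in> P}" for x y
  have "(x, y) \<in> (covering P)\<^sup>+" if "(x, y) \<in> P" for x y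
    using that
  proof (induction "card (between x y)" arbitrary: x y rule: less_induct)
    case less
    show ?case
    proof (cases "(x, y) \<in> covering P")
      case False
      then obtain z where z: "(x, z) \<in> P" "(z, y) \<in> P"
        using less.prems unfolding covering_def by blast
      have "between x z \<subset> between x y" "between z y \<subset> between x y"
        using z assms(2,3) unfolding between_def trans_def irrefl_def by blast+
      moreover have "finite (between x y)"
        using finite_Range[OF assms(1)] by (rule rev_finite_subset) (auto simp: between_def)
      ultimately have "card (between x z) < card (between x y)" "card (between z y) < card (between x y)"
        by (simp_all add: psubset_card_mono)
      with less.hyps z show ?thesis by (meson trancl_trans)
    qed blast
  qed
  then show "P \<subseteq> (covering P)\<^sup>+" by auto
qed

lemma ranking_reverse_covering_pair:
  assumes "ranking P" "(x, y) \<in> covering P"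
  shows "ranking (insert (y, x) (P - {(x, y)}))"
  using assms unfolding ranking_iff covering_def trans_def by blast

lemma faithful_covering_subset:
  assumes "faithful \<rho>" "tournament V" "ranking (\<rho> V)"
  shows "covering (\<rho> V) \<subseteq> V"
proof (rule subrelI, rule ccontr)
  fix x y assume cov: "(x, y) \<in> covering (\<rho> V)" and "(x, y) \<notin> V"
  define R where "R = insert (y, x) (\<rho> V - {(x, y)})"
  have "ranking R"
    unfolding R_def using assms(3) cov by (rule ranking_reverse_covering_pair)
  moreover have "R \<noteq> \<rho> V"
    using cov assms(3) unfolding R_def covering_def ranking_iff by auto
  moreover have "more_aligned V R (\<rho> V)"
    using \<open>(x, y) \<notin> V\<close> unfolding more_aligned_def R_def by blast
  ultimately show False
    using assms(1,2) unfolding faithful_def by blast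
qed

lemma faithful_rankings_differ:
  fixes \<rho> :: "('a::finite) rel \<Rightarrow> 'a rel"
  assumes "ranking_method \<rho>" "faithful \<rho>" "tournament W" "tournament W'"
    and "\<not> total ((W \<inter> W')\<^sup>+)"
  shows "\<rho> W \<noteq> \<rho> W'"
proof
  assume same: "\<rho> W = \<rho> W'"
  have rk: "ranking (\<rho> W)" "ranking (\<rho> W')"
    using assms(1,3,4) unfolding ranking_method_def by blast+
  then have "covering (\<rho> W) \<subseteq> W \<inter> W'"
    using faithful_covering_subset[OF assms(2)] assms(3,4) same by (metis Int_greatest)
  moreover have "(covering (\<rho> W))\<^sup>+ = \<rho> W"
    using rk(1) by (intro trancl_covering) (simp_all add: ranking_def proto_ranking_def)
  ultimately have "\<rho> W \<subseteq> (W \<inter> W')\<^sup>+"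
    by (metis trancl_mono_subset)
  with rk(1) assms(5) show False
    unfolding ranking_def using total_mono by blast
qed

section \<open>Plays of a strategy\<close>

lemma rel_of_eq_trancl_set: "rel_of h = (set h)\<^sup>+"
proof (induction h rule: rev_induct)
  case (snoc p h)
  then show ?case
    by (simp add: rel_of_def) (metis insert_is_Un Un_commute trancl_trancl_Un)
qed (simp add: rel_of_def)

lemma duel_cases: "duel W (a, b) = (a, b) \<or> duel W (a, b) = (b, a)"
  unfolding duel_def by simp

lemma duel_in_tournament: "tournament W \<Longrightarrow> a \<noteq> b \<Longrightarrow> duel W (a, b) \<in> W"
  unfolding duel_def tournament_iff by auto

lemma hist_at_stable:
  "n \<le> m \<Longrightarrow> total (rel_of (hist_at \<sigma> W n)) \<Longrightarrow> hist_at \<sigma> W m = hist_at \<sigma> W n"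
  by (induction m rule: dec_induct) (auto simp: Let_def)

lemma set_hist_at_mono: "n \<le> m \<Longrightarrow> set (hist_at \<sigma> W n) \<subseteq> set (hist_at \<sigma> W m)"
  by (induction m rule: dec_induct) (auto simp: Let_def)

lemma outcome_unique: "outcome \<sigma> W R \<Longrightarrow> outcome \<sigma> W R' \<Longrightarrow> R = R'"
  unfolding outcome_def by (metis hist_at_stable nat_le_linear)

lemma set_hist_at_subset_outcome: "outcome \<sigma> W R \<Longrightarrow> set (hist_at \<sigma> W n) \<subseteq> R"
  unfolding outcome_def
  by (metis hist_at_stable nat_le_linear rel_of_eq_trancl_set set_hist_at_mono trancl_incr order_trans)

lemma hist_at_in_histories:
  assumes "is_strategy \<sigma>"
  shows "hist_at \<sigma> W n \<in> histories"
proof (induction n)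
  case (Suc n)
  let ?h = "hist_at \<sigma> W n"
  show ?case
  proof (cases "total (rel_of ?h)")
    case False
    obtain a b where ab: "\<sigma> ?h = (a, b)" by fastforce
    obtain w l where wl: "duel W (a, b) = (w, l)" by fastforce
    from assms Suc.IH False ab have "unranked (rel_of ?h) a b"
      unfolding is_strategy_def by fastforce
    then have "unranked (rel_of ?h) w l"
      using duel_cases[of W a b] wl unfolding unranked_def by auto
    with Suc.IH False ab wl show ?thesis
      by (simp add: Let_def histories.snoc)
  qed (simp add: Suc.IH)
qed (simp add: histories.Nil)

lemma strategy_offer_unranked:
  assumes "is_strategy \<sigma>" "\<not> total (rel_of (hist_at \<sigma> W n))" "\<sigma> (hist_at \<sigma> W n) = (a, b)"
  shows "unranked (rel_of (hist_at \<sigma> W n)) a b"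
  using assms hist_at_in_histories unfolding is_strategy_def by fastforce

lemma set_hist_at_subset:
  assumes "is_strategy \<sigma>" "tournament W"
  shows "set (hist_at \<sigma> W n) \<subseteq> W"
proof (induction n)
  case (Suc n)
  let ?h = "hist_at \<sigma> W n"
  obtain a b where ab: "\<sigma> ?h = (a, b)" by fastforce
  show ?case
  proof (cases "total (rel_of ?h)")
    case False
    then have "a \<noteq> b"
      using strategy_offer_unranked[OF assms(1) _ ab] unfolding unranked_def by blast
    with Suc.IH False ab assms(2) show ?thesis
      by (simp add: Let_def duel_in_tournament)
  qed (simp add: Suc.IH)
qed simp

lemma hist_at_card_growth:
  fixes \<sigma> :: "('a::finite \<times> 'a) list \<Rightarrow> 'a \<times> 'a"
  assumes "is_strategy \<sigma>"
  shows "total (rel_of (hist_at \<sigma> W n)) \<or> n \<le> card (rel_of (hist_at \<sigma> W n))"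
proof (induction n)
  case (Suc n)
  let ?h = "hist_at \<sigma> W n"
  obtain a b where ab: "\<sigma> ?h = (a, b)" by fastforce
  show ?case
  proof (cases "total (rel_of ?h)")
    case False
    let ?d = "duel W (a, b)"
    have "?d \<notin> rel_of ?h"
      using strategy_offer_unranked[OF assms False ab] duel_cases[of W a b]
      unfolding unranked_def by auto
    then have "card (rel_of ?h) < card (insert ?d (rel_of ?h))"
      by (simp add: card_insert_disjoint[OF finite])
    also have "\<dots> \<le> card (rel_of (?h @ [?d]))"
      unfolding rel_of_eq_trancl_set
      by (rule card_mono[OF finite]) (auto intro: trancl_mono r_into_trancl')
    finally have "card (rel_of ?h) < card (rel_of (?h @ [?d]))" .
    with Suc.IH False ab show ?thesis
      by (simp add: Let_def)
  qed (simp add: Let_def)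
qed simp

lemma hist_at_terminates:
  fixes \<sigma> :: "('a::finite \<times> 'a) list \<Rightarrow> 'a \<times> 'a"
  assumes "is_strategy \<sigma>"
  shows "\<exists>n. total (rel_of (hist_at \<sigma> W n))"
proof -
  let ?n = "Suc (card (UNIV :: ('a \<times> 'a) set))"
  have "card (rel_of (hist_at \<sigma> W ?n)) < ?n"
    by (simp add: card_mono le_imp_less_Suc)
  then show ?thesis
    using hist_at_card_growth[OF assms, of W ?n] by (meson not_le)
qed

lemma hist_at_agree:
  assumes "is_strategy \<sigma>" "tournament V" "set (hist_at \<sigma> W n) \<subseteq> V"
  shows "hist_at \<sigma> V n = hist_at \<sigma> W n"
  using assms(3)
proof (induction n)
  case (Suc n)
  let ?h = "hist_at \<sigma> W n"
  have IH: "hist_at \<sigma> V n = ?h"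
    using Suc set_hist_at_mono[of n "Suc n" \<sigma> W] by auto
  obtain a b where ab: "\<sigma> ?h = (a, b)" by fastforce
  show ?case
  proof (cases "total (rel_of ?h)")
    case False
    then have "a \<noteq> b"
      using strategy_offer_unranked[OF assms(1) _ ab] unfolding unranked_def by blast
    moreover have "duel W (a, b) \<in> V"
      using Suc.prems False ab by (simp add: Let_def)
    moreover have "duel V (a, b) \<in> V"
      using duel_in_tournament[OF assms(2) \<open>a \<noteq> b\<close>] .
    ultimately have "duel V (a, b) = duel W (a, b)"
      using duel_cases[of V a b] duel_cases[of W a b] tournament_swap_iff[OF assms(2) \<open>a \<noteq> b\<close>] by auto
    with IH False ab show ?thesis
      by (simp add: Let_def)
  qed (simp add: IH)
qed simp

lemma outcome_decides_offered_pair: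
  assumes "is_strategy \<sigma>" "tournament V" "outcome \<sigma> V R" "ranking R"
    and "\<not> total (rel_of (hist_at \<sigma> V k))" "\<sigma> (hist_at \<sigma> V k) = (a, b)"
    and "(x, y) = (a, b) \<or> (x, y) = (b, a)"
  shows "(x, y) \<in> R \<longleftrightarrow> (x, y) \<in> V"
proof -
  have "a \<noteq> b"
    using strategy_offer_unranked[OF assms(1,5,6)] unfolding unranked_def by blast
  then have "x \<noteq> y" "duel V (a, b) \<in> V"
    using assms(7) duel_in_tournament[OF assms(2)] by auto
  moreover have "duel V (a, b) \<in> R"
    using set_hist_at_subset_outcome[OF assms(3), of "Suc k"] assms(5,6) by (simp add: Let_def)
  moreover have "duel V (a, b) = (x, y) \<or> duel V (a, b) = (y, x)"
    using assms(7) duel_cases[of V a b] by auto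
  ultimately show ?thesis
    using ranking_swap_iff[OF assms(4) \<open>x \<noteq> y\<close>] tournament_swap_iff[OF assms(2) \<open>x \<noteq> y\<close>] by auto
qed

lemma hist_at_diverge:
  assumes "outcome \<sigma> W R" "outcome \<sigma> W' R'" "R \<noteq> R'"
  obtains k where "hist_at \<sigma> W' k = hist_at \<sigma> W k" "\<not> total (rel_of (hist_at \<sigma> W k))"
    "duel W' (\<sigma> (hist_at \<sigma> W k)) \<noteq> duel W (\<sigma> (hist_at \<sigma> W k))"
proof -
  have "\<exists>n. hist_at \<sigma> W n \<noteq> hist_at \<sigma> W' n"
  proof (rule ccontr)
    assume "\<nexists>n. hist_at \<sigma> W n \<noteq> hist_at \<sigma> W' n"
    then have "outcome \<sigma> W' R"
      using assms(1) unfolding outcome_def by simp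
    then show False
      using outcome_unique assms(2,3) by blast
  qed
  then obtain n where n: "hist_at \<sigma> W n \<noteq> hist_at \<sigma> W' n"
    and before: "\<And>j. j < n \<Longrightarrow> hist_at \<sigma> W j = hist_at \<sigma> W' j"
    using exists_least_iff[of "\<lambda>n. hist_at \<sigma> W n \<noteq> hist_at \<sigma> W' n"] by blast
  then obtain k where k: "n = Suc k"
    by (cases n) auto
  have "hist_at \<sigma> W' k = hist_at \<sigma> W k"
    using before k by simp
  moreover have "\<not> total (rel_of (hist_at \<sigma> W k))"
    using n k calculation by (auto simp: Let_def)
  moreover have "duel W' (\<sigma> (hist_at \<sigma> W k)) \<noteq> duel W (\<sigma> (hist_at \<sigma> W k))"
    using n k calculation by (auto simp: Let_def)
  ultimately show ?thesis
    using that by blast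
qed

section \<open>Necessity\<close>

lemma feasible_imp_faithful:
  assumes "feasible \<rho>"
  shows "faithful \<rho>"
  unfolding faithful_def
proof (intro allI impI notI)
  fix W :: "'a rel" assume W: "tournament W"
  assume "\<exists>R. ranking R \<and> R \<noteq> \<rho> W \<and> more_aligned W R (\<rho> W)"
  then obtain R where R: "ranking R" "R \<noteq> \<rho> W" "more_aligned W R (\<rho> W)" by blast
  obtain \<sigma> where \<sigma>: "is_strategy \<sigma>" "outcome \<sigma> W (\<rho> W)"
    using assms W unfolding feasible_def by blast
  then obtain n where n: "total (rel_of (hist_at \<sigma> W n))" "\<rho> W = rel_of (hist_at \<sigma> W n)"
    unfolding outcome_def by blast
  have "set (hist_at \<sigma> W n) \<subseteq> R"
    using set_hist_at_subset[OF \<sigma>(1) W, of n] set_hist_at_subset_outcome[OF \<sigma>(2), of n] R(3)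
    unfolding more_aligned_def by auto
  then have "\<rho> W \<subseteq> R"
    using n(2) R(1) trancl_subset_trans
    unfolding rel_of_eq_trancl_set ranking_def proto_ranking_def by blast
  then show False
    using total_subset_ranking_eq n R by metis
qed

lemma feasible_imp_consistent:
  assumes "ranking_method \<rho>" "feasible \<rho>"
  shows "consistent \<rho>"
  unfolding consistent_def
proof (intro allI impI)
  fix W W' assume W: "tournament W" and W': "tournament W'" and "\<rho> W \<noteq> \<rho> W'"
  obtain \<sigma> where \<sigma>: "is_strategy \<sigma>" "\<And>V. tournament V \<Longrightarrow> outcome \<sigma> V (\<rho> V)"
    using assms(2) unfolding feasible_def by blast
  obtain k where agree: "hist_at \<sigma> W' k = hist_at \<sigma> W k"
    and nt: "\<not> total (rel_of (hist_at \<sigma> W k))"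
    and differ: "duel W' (\<sigma> (hist_at \<sigma> W k)) \<noteq> duel W (\<sigma> (hist_at \<sigma> W k))"
    using hist_at_diverge[OF \<sigma>(2)[OF W] \<sigma>(2)[OF W'] \<open>\<rho> W \<noteq> \<rho> W'\<close>] by blast
  obtain a b where ab: "\<sigma> (hist_at \<sigma> W k) = (a, b)" by fastforce
  then have "a \<noteq> b"
    using strategy_offer_unranked[OF \<sigma>(1) nt] unfolding unranked_def by blast
  obtain x y where xy: "duel W (a, b) = (x, y)" by fastforce
  with differ ab have xy_ab: "(x, y) = (a, b) \<or> (x, y) = (b, a)" and yx: "duel W' (a, b) = (y, x)"
    using duel_cases[of W a b] duel_cases[of W' a b] by auto
  show "\<exists>x y. (x, y) \<in> W \<and> (y, x) \<in> W' \<and>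
          (\<forall>W''. tournament W'' \<longrightarrow> W \<inter> W' \<subseteq> W'' \<longrightarrow> ((x, y) \<in> \<rho> W'' \<longleftrightarrow> (x, y) \<in> W''))"
  proof (intro exI conjI allI impI)
    show "(x, y) \<in> W" "(y, x) \<in> W'"
      using duel_in_tournament[OF W \<open>a \<noteq> b\<close>] duel_in_tournament[OF W' \<open>a \<noteq> b\<close>] xy yx by simp_all
    fix W'' assume W'': "tournament W''" "W \<inter> W' \<subseteq> W''"
    have "set (hist_at \<sigma> W k) \<subseteq> W \<inter> W'"
      using set_hist_at_subset[OF \<sigma>(1) W, of k] set_hist_at_subset[OF \<sigma>(1) W', of k] agree by auto
    then have "hist_at \<sigma> W'' k = hist_at \<sigma> W k"
      using hist_at_agree[OF \<sigma>(1) W''(1)] W''(2) by blast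
    moreover have "ranking (\<rho> W'')"
      using assms(1) W''(1) unfolding ranking_method_def by blast
    ultimately show "(x, y) \<in> \<rho> W'' \<longleftrightarrow> (x, y) \<in> W''"
      using nt ab xy_ab
      by (intro outcome_decides_offered_pair[OF \<sigma>(1) W''(1) \<sigma>(2)[OF W''(1)], where k = k]) simp_all
  qed
qed

section \<open>Sufficiency\<close>

definition decisive :: "('a rel \<Rightarrow> 'a rel) \<Rightarrow> 'a rel \<Rightarrow> 'a \<times> 'a \<Rightarrow> bool" where
  "decisive \<rho> S p \<longleftrightarrow> (\<forall>W. tournament W \<and> S \<subseteq> W \<longrightarrow> (p \<in> \<rho> W \<longleftrightarrow> p \<in> W))"

definition settled :: "('a rel \<Rightarrow> 'a rel) \<Rightarrow> 'a rel \<Rightarrow> bool" where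
  "settled \<rho> S \<longleftrightarrow> (\<forall>W. tournament W \<and> S \<subseteq> W \<longrightarrow> S \<subseteq> \<rho> W)"

lemma decisive_swap:
  assumes "ranking_method \<rho>" "a \<noteq> b" "decisive \<rho> S (a, b)"
  shows "decisive \<rho> S (b, a)"
  unfolding decisive_def
proof (intro allI impI)
  fix W assume W: "tournament W \<and> S \<subseteq> W"
  then have "ranking (\<rho> W)"
    using assms(1) unfolding ranking_method_def by blast
  moreover have "(a, b) \<in> \<rho> W \<longleftrightarrow> (a, b) \<in> W"
    using W assms(3) unfolding decisive_def by blast
  ultimately show "(b, a) \<in> \<rho> W \<longleftrightarrow> (b, a) \<in> W"
    using ranking_swap_iff[OF _ assms(2)] tournament_swap_iff[OF _ assms(2)] W by simp
qed

lemma settled_insert: "settled \<rho> S \<Longrightarrow> decisive \<rho> S p \<Longrightarrow> settled \<rho> (insert p S)"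
  unfolding settled_def decisive_def by blast

lemma settled_trancl_subset:
  assumes "ranking_method \<rho>" "settled \<rho> S" "tournament W" "S \<subseteq> W"
  shows "S\<^sup>+ \<subseteq> \<rho> W"
proof (rule trancl_subset_trans)
  show "S \<subseteq> \<rho> W"
    using assms(2-4) unfolding settled_def by blast
  show "trans (\<rho> W)"
    using assms(1,3) unfolding ranking_method_def ranking_def proto_ranking_def by blast
qed

lemma decisive_pair_unranked:
  assumes "ranking_method \<rho>" "settled \<rho> S" "decisive \<rho> S (x, y)"
    and "tournament W" "S \<subseteq> W" "(x, y) \<in> W"
    and "tournament W'" "S \<subseteq> W'" "(y, x) \<in> W'"
  shows "unranked (S\<^sup>+) x y"
proof -
  have "x \<noteq> y"
    using assms(4,6) unfolding tournament_iff by blast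
  have "(x, y) \<notin> S\<^sup>+"
  proof
    assume "(x, y) \<in> S\<^sup>+"
    then have "(x, y) \<in> \<rho> W'"
      using settled_trancl_subset[OF assms(1,2,7,8)] by blast
    then have "(x, y) \<in> W'"
      using assms(3,7,8) unfolding decisive_def by blast
    with assms(9) show False
      using tournament_swap_iff[OF assms(7) \<open>x \<noteq> y\<close>] by simp
  qed
  moreover have "(y, x) \<notin> S\<^sup>+"
  proof
    assume "(y, x) \<in> S\<^sup>+"
    then have "(y, x) \<in> \<rho> W"
      using settled_trancl_subset[OF assms(1,2,4,5)] by blast
    moreover have "(x, y) \<in> \<rho> W"
      using assms(3-6) unfolding decisive_def by blast
    moreover have "ranking (\<rho> W)"
      using assms(1,4) unfolding ranking_method_def by blast
    ultimately show False
      using ranking_swap_iff[OF _ \<open>x \<noteq> y\<close>] by blast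
  qed
  ultimately show ?thesis
    using \<open>x \<noteq> y\<close> unfolding unranked_def by blast
qed

lemma tournament_reverse_outside:
  assumes "tournament W" "S \<subseteq> W"
  shows "tournament (S \<union> (W\<inverse> - S\<inverse>))" and "W \<inter> (S \<union> (W\<inverse> - S\<inverse>)) = S"
proof -
  have total_W: "\<forall>x y. x \<noteq> y \<longrightarrow> (x, y) \<in> W \<or> (y, x) \<in> W"
    and asym_W: "\<forall>x y. (x, y) \<in> W \<longrightarrow> (y, x) \<notin> W"
    using assms(1) unfolding tournament_iff by blast+
  show "tournament (S \<union> (W\<inverse> - S\<inverse>))"
    unfolding tournament_iff using total_W asym_W assms(2) by blast
  show "W \<inter> (S \<union> (W\<inverse> - S\<inverse>)) = S"
    using asym_W assms(2) by blast
qed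

lemma decisive_unranked_pair_exists:
  fixes \<rho> :: "('a::finite) rel \<Rightarrow> 'a rel"
  assumes "ranking_method \<rho>" "faithful \<rho>" "consistent \<rho>"
    and "tournament W" "S \<subseteq> W" "settled \<rho> S" "\<not> total (S\<^sup>+)"
  shows "\<exists>x y. unranked (S\<^sup>+) x y \<and> decisive \<rho> S (x, y)"
proof -
  define W' where "W' = S \<union> (W\<inverse> - S\<inverse>)"
  have W': "tournament W'" and WW': "W \<inter> W' = S"
    unfolding W'_def using tournament_reverse_outside[OF assms(4,5)] by blast+
  then have "\<rho> W \<noteq> \<rho> W'"
    using faithful_rankings_differ[OF assms(1,2,4)] assms(7) by simp
  then obtain x y where xy: "(x, y) \<in> W" "(y, x) \<in> W'"
    and decided: "\<forall>V. tournament V \<longrightarrow> W \<inter> W' \<subseteq> V \<longrightarrow> ((x, y) \<in> \<rho> V \<longleftrightarrow> (x, y) \<in> V)"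
    using assms(3)[unfolded consistent_def, rule_format, OF assms(4) W'] by blast
  have "decisive \<rho> S (x, y)"
    unfolding decisive_def using decided WW' by simp
  moreover have "S \<subseteq> W'"
    using WW' by blast
  ultimately show ?thesis
    using decisive_pair_unranked[OF assms(1,6) _ assms(4,5) xy(1) W' _ xy(2)] by blast
qed

(* The fallback branch is never taken along a play of a faithful and consistent method; it only
   makes the strategy offer an unranked pair at every history. *)
definition decisive_strategy :: "('a rel \<Rightarrow> 'a rel) \<Rightarrow> ('a \<times> 'a) list \<Rightarrow> 'a \<times> 'a" where
  "decisive_strategy \<rho> h =
     (if \<exists>p. unranked (rel_of h) (fst p) (snd p) \<and> decisive \<rho> (set h) p
      then SOME p. unranked (rel_of h) (fst p) (snd p) \<and> decisive \<rho> (set h) p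
      else SOME p. unranked (rel_of h) (fst p) (snd p))"

lemma decisive_strategy_decisive:
  "\<exists>p. unranked (rel_of h) (fst p) (snd p) \<and> decisive \<rho> (set h) p
    \<Longrightarrow> decisive \<rho> (set h) (decisive_strategy \<rho> h)"
  using someI_ex[of "\<lambda>p. unranked (rel_of h) (fst p) (snd p) \<and> decisive \<rho> (set h) p"]
  unfolding decisive_strategy_def by simp

lemma decisive_strategy_unranked:
  assumes "\<not> total (rel_of h)"
  shows "unranked (rel_of h) (fst (decisive_strategy \<rho> h)) (snd (decisive_strategy \<rho> h))"
proof -
  have "\<exists>p. unranked (rel_of h) (fst p) (snd p)"
    using assms unfolding total_on_def unranked_def by auto
  then show ?thesis
    using someI_ex[of "\<lambda>p. unranked (rel_of h) (fst p) (snd p) \<and> decisive \<rho> (set h) p"]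
      someI_ex[of "\<lambda>p. unranked (rel_of h) (fst p) (snd p)"]
    unfolding decisive_strategy_def by auto
qed

lemma is_strategy_decisive_strategy: "is_strategy (decisive_strategy \<rho>)"
  unfolding is_strategy_def using decisive_strategy_unranked by blast

lemma settled_hist_at_decisive_strategy:
  fixes \<rho> :: "('a::finite) rel \<Rightarrow> 'a rel"
  assumes "ranking_method \<rho>" "faithful \<rho>" "consistent \<rho>" "tournament W"
  shows "settled \<rho> (set (hist_at (decisive_strategy \<rho>) W n))"
proof (induction n)
  case 0
  show ?case by (simp add: settled_def)
next
  case (Suc n)
  let ?h = "hist_at (decisive_strategy \<rho>) W n"
  show ?case
  proof (cases "total (rel_of ?h)")
    case False
    have "set ?h \<subseteq> W"
      using set_hist_at_subset[OF is_strategy_decisive_strategy assms(4)] .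
    then have "\<exists>x y. unranked (rel_of ?h) x y \<and> decisive \<rho> (set ?h) (x, y)"
      using decisive_unranked_pair_exists[OF assms _ Suc.IH] False
      unfolding rel_of_eq_trancl_set by blast
    then have dec: "decisive \<rho> (set ?h) (decisive_strategy \<rho> ?h)"
      by (intro decisive_strategy_decisive) auto
    obtain a b where ab: "decisive_strategy \<rho> ?h = (a, b)" by fastforce
    then have "a \<noteq> b"
      using decisive_strategy_unranked[OF False] unfolding unranked_def by (metis fst_conv snd_conv)
    then have "decisive \<rho> (set ?h) (duel W (a, b))"
      using dec ab duel_cases[of W a b] decisive_swap[OF assms(1) \<open>a \<noteq> b\<close>] by auto
    then show ?thesis
      using settled_insert[OF Suc.IH] False ab by (simp add: Let_def)
  qed (simp add: Suc.IH)
qed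

lemma faithful_consistent_imp_feasible:
  fixes \<rho> :: "('a::finite) rel \<Rightarrow> 'a rel"
  assumes "ranking_method \<rho>" "faithful \<rho>" "consistent \<rho>"
  shows "feasible \<rho>"
  unfolding feasible_def
proof (intro exI conjI allI impI)
  let ?\<sigma> = "decisive_strategy \<rho>"
  show "is_strategy ?\<sigma>"
    by (rule is_strategy_decisive_strategy)
  fix W :: "'a rel" assume W: "tournament W"
  obtain n where n: "total (rel_of (hist_at ?\<sigma> W n))"
    using hist_at_terminates[OF is_strategy_decisive_strategy] by blast
  have "ranking (\<rho> W)"
    using assms(1) W unfolding ranking_method_def by blast
  moreover have "rel_of (hist_at ?\<sigma> W n) \<subseteq> \<rho> W"
    using settled_trancl_subset[OF assms(1) settled_hist_at_decisive_strategy[OF assms W] W]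
      set_hist_at_subset[OF is_strategy_decisive_strategy W]
    unfolding rel_of_eq_trancl_set by blast
  ultimately have "rel_of (hist_at ?\<sigma> W n) = \<rho> W"
    using total_subset_ranking_eq n by blast
  then show "outcome ?\<sigma> W (\<rho> W)"
    unfolding outcome_def using n by metis
qed

theorem proposition8:
  fixes \<rho> :: "('a::finite) rel \<Rightarrow> 'a rel"
  assumes "ranking_method \<rho>"
  shows "feasible \<rho> \<longleftrightarrow> faithful \<rho> \<and> consistent \<rho>"
  using feasible_imp_faithful feasible_imp_consistent[OF assms]
    faithful_consistent_imp_feasible[OF assms] by blast

end
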